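(* Let $p=1^i0^j1^k$ with integers $i,k\ge0$ and $j\ge1$. For every $n\ge i+j+k$, $$M_{n,p}=\max\left\{\binom{a}{i}\binom{b}{j}\binom{c}{k}\ :\ a,b,c\ge 0,\ a+b+c=n\right\}.$$
   Context: $c_p(w)$ is the number of occurrences of $p$ as a (not necessarily consecutive) subsequence of the binary word $w$. $M_{n,p}=\max\{c_p(w): w\in\{0,1\}^n\}$. $x^m$ denotes the letter $x$ repeated $m$ times. *)

theory Defs
  imports Main
begin

definition occ :: "nat list \<Rightarrow> nat list \<Rightarrow> nat" where
  "occ p w = card {I. I \<subseteq> {0..<length w} \<and> card I = length p \<and>
      (\<forall>t < length p. w ! (sorted_list_of_set I ! t) = p ! t)}"

definition binwords :: "nat \<Rightarrow> nat list set" where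
  "binwords n = {w. length w = n \<and> set w \<subseteq> {0, 1}}"

definition Mnp :: "nat \<Rightarrow> nat list \<Rightarrow> nat" where
  "Mnp n p = Max (occ p ` binwords n)"

end

theory Submission
  imports Defs
begin

text \<open>An occurrence of \<open>1\<^sup>i 0\<^sup>j 1\<^sup>k\<close> in \<open>w\<close> is a set of positions \<open>A \<union> J \<union> C\<close>, with \<open>J\<close>
  a \<open>j\<close>-set of zeros and \<open>A\<close>, \<open>C\<close> an \<open>i\<close>-set and a \<open>k\<close>-set of ones lying before and after \<open>J\<close>.
  For fixed \<open>J\<close>, \<open>A\<close> lies among the \<open>x\<close> ones before \<open>Min J\<close> and \<open>C\<close> among the \<open>T - x\<close> ones
  after it, \<open>T\<close> being the number of ones. Summing over the \<open>m choose j\<close> choices of \<open>J\<close>, where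
  \<open>m = n - T\<close> is the number of zeros, bounds \<open>occ\<close> by \<open>(x choose i) * (m choose j) * ((T - x) choose k)\<close>
  for the best \<open>x\<close>. Conversely, \<open>1\<^sup>a 0\<^sup>b 1\<^sup>c\<close> has at least
  \<open>(a choose i) * (b choose j) * (c choose k)\<close> occurrences.\<close>

definition embeddings :: "'a list \<Rightarrow> 'a list \<Rightarrow> nat set set" where
  "embeddings p w = {I. I \<subseteq> {0..<length w} \<and> card I = length p \<and>
     map ((!) w) (sorted_list_of_set I) = p}"

definition positions :: "'a \<Rightarrow> 'a list \<Rightarrow> nat set" where
  "positions x w = {q. q < length w \<and> w ! q = x}"

lemma occ_eq_card_embeddings: "occ p w = card (embeddings p w)"
proof -
  have "(\<forall>t < length p. w ! (sorted_list_of_set I ! t) = p ! t) \<longleftrightarrow>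
        map ((!) w) (sorted_list_of_set I) = p" if "card I = length p" for I
    using that by (auto simp: list_eq_iff_nth_eq)
  then show ?thesis
    unfolding occ_def embeddings_def by (metis (lifting))
qed

lemma finite_positions: "finite (positions x w)"
  by (rule finite_subset[of _ "{..<length w}"]) (auto simp: positions_def)

lemma finite_embeddings: "finite (embeddings p w)"
  by (rule finite_subset[of _ "Pow {0..<length w}"]) (auto simp: embeddings_def)

lemma sorted_list_of_set_strict_sorted: "sorted_wrt (<) xs \<Longrightarrow> sorted_list_of_set (set xs) = xs"
  by (simp add: strict_sorted_iff sorted_list_of_set.idem_if_sorted_distinct)

lemma sorted_list_of_set_Un_less:
  fixes A B :: "'a::linorder set"
  assumes "finite A" "finite B" "\<forall>a\<in>A. \<forall>b\<in>B. a < b"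
  shows "sorted_list_of_set (A \<union> B) = sorted_list_of_set A @ sorted_list_of_set B"
proof -
  have "sorted_wrt (<) (sorted_list_of_set A @ sorted_list_of_set B)"
    using assms by (simp add: sorted_wrt_append strict_sorted_list_of_set)
  then show ?thesis
    using sorted_list_of_set_strict_sorted assms(1,2) by fastforce
qed

lemma embeddings_append:
  "embeddings (p @ q) w =
     {A \<union> B | A B. A \<in> embeddings p w \<and> B \<in> embeddings q w \<and> (\<forall>a\<in>A. \<forall>b\<in>B. a < b)}"
proof (intro equalityI subsetI)
  fix I assume "I \<in> embeddings (p @ q) w"
  then have I: "I \<subseteq> {0..<length w}" "card I = length p + length q"
    and map_L: "map ((!) w) (sorted_list_of_set I) = p @ q"
    by (auto simp: embeddings_def)
  define L where "L = sorted_list_of_set I"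
  have "finite I" using I(1) finite_subset by blast
  then have L_sorted: "sorted_wrt (<) L" and set_L: "set L = I"
    by (simp_all add: L_def strict_sorted_list_of_set)
  define A where "A = set (take (length p) L)"
  define B where "B = set (drop (length p) L)"
  have sorted_AB: "sorted_list_of_set A = take (length p) L" "sorted_list_of_set B = drop (length p) L"
    using L_sorted by (simp_all add: A_def B_def sorted_list_of_set_strict_sorted sorted_wrt_take sorted_wrt_drop)
  have "A \<in> embeddings p w" "B \<in> embeddings q w"
    using I set_L map_L sorted_AB
    by (auto simp: embeddings_def A_def B_def L_def take_map[symmetric] drop_map[symmetric]
        dest: in_set_takeD in_set_dropD simp flip: length_sorted_list_of_set)
  moreover have "\<forall>a\<in>A. \<forall>b\<in>B. a < b"
    using L_sorted sorted_wrt_append[of "(<)" "take (length p) L" "drop (length p) L"]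
    by (simp add: A_def B_def)
  moreover have "I = A \<union> B"
    using set_L by (simp add: A_def B_def flip: set_append)
  ultimately show "I \<in> {A \<union> B | A B.
      A \<in> embeddings p w \<and> B \<in> embeddings q w \<and> (\<forall>a\<in>A. \<forall>b\<in>B. a < b)}"
    by blast
next
  fix I assume "I \<in> {A \<union> B | A B.
      A \<in> embeddings p w \<and> B \<in> embeddings q w \<and> (\<forall>a\<in>A. \<forall>b\<in>B. a < b)}"
  then obtain A B where I: "I = A \<union> B" and A: "A \<in> embeddings p w" and B: "B \<in> embeddings q w"
    and less: "\<forall>a\<in>A. \<forall>b\<in>B. a < b" by blast
  have fin: "finite A" "finite B"
    using A B by (auto simp: embeddings_def intro: finite_subset)
  have "A \<inter> B = {}" using less by fastforce
  then show "I \<in> embeddings (p @ q) w"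
    using A B fin by (simp add: embeddings_def I sorted_list_of_set_Un_less[OF fin less] card_Un_disjoint)
qed

lemma embeddings_replicate:
  "embeddings (replicate i x) w = {A. A \<subseteq> positions x w \<and> card A = i}"
proof -
  have map_iff: "map ((!) w) (sorted_list_of_set A) = replicate (card A) x \<longleftrightarrow> (\<forall>q\<in>A. w ! q = x)"
    if "finite A" for A
    using that by (auto intro: replicate_eqI dest!: arg_cong[where f = set])
  have "A \<subseteq> positions x w \<longleftrightarrow> A \<subseteq> {0..<length w} \<and> (\<forall>q\<in>A. w ! q = x)" for A
    by (auto simp: positions_def)
  moreover have "finite A" if "A \<subseteq> {0..<length w}" for A
    using that finite_subset by blast
  ultimately show ?thesis
    unfolding embeddings_def using map_iff by (metis (lifting) length_replicate)
qed

lemma embedding_block_pattern_split: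
  assumes "I \<in> embeddings (replicate i x @ replicate j y @ replicate k x) w" and "j \<ge> 1"
  obtains J A C where "J \<subseteq> positions y w" "card J = j"
    "A \<subseteq> positions x w \<inter> {..<Min J}" "card A = i"
    "C \<subseteq> positions x w \<inter> {Min J<..}" "card C = k" "I = A \<union> J \<union> C"
proof -
  obtain A J C where A: "A \<subseteq> positions x w" "card A = i"
    and J: "J \<subseteq> positions y w" "card J = j"
    and C: "C \<subseteq> positions x w" "card C = k"
    and less: "\<forall>a\<in>A. \<forall>b\<in>J \<union> C. a < b" "\<forall>b\<in>J. \<forall>c\<in>C. b < c"
    and I: "I = A \<union> (J \<union> C)"
    using assms(1) by (auto simp: embeddings_append embeddings_replicate)
  have "finite J" "J \<noteq> {}"
    using J assms(2) by (auto intro: card_ge_0_finite)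
  then have "Min J \<in> J" by (rule Min_in)
  then have "A \<subseteq> positions x w \<inter> {..<Min J}" "C \<subseteq> positions x w \<inter> {Min J<..}"
    using A C less by auto
  with that A J C I show thesis by (simp add: Un_assoc)
qed

lemma card_subsets_below_above_le:
  fixes X :: "'a::linorder set"
  assumes "finite X" and "m \<notin> X"
  shows "card {A. A \<subseteq> X \<inter> {..<m} \<and> card A = i} * card {C. C \<subseteq> X \<inter> {m<..} \<and> card C = k}
    \<le> Max ((\<lambda>t. (t choose i) * ((card X - t) choose k)) ` {..card X})"
proof -
  have "X = (X \<inter> {..<m}) \<union> (X \<inter> {m<..})"
    using assms(2) by (auto simp: not_less_iff_gr_or_eq)
  moreover have "card ((X \<inter> {..<m}) \<union> (X \<inter> {m<..})) = card (X \<inter> {..<m}) + card (X \<inter> {m<..})"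
    by (rule card_Un_disjoint) (use assms(1) in auto)
  ultimately have card_X: "card X = card (X \<inter> {..<m}) + card (X \<inter> {m<..})"
    by simp
  then have "card {A. A \<subseteq> X \<inter> {..<m} \<and> card A = i} * card {C. C \<subseteq> X \<inter> {m<..} \<and> card C = k}
      = (card (X \<inter> {..<m}) choose i) * ((card X - card (X \<inter> {..<m})) choose k)"
    using n_subsets[of "X \<inter> {..<m}" i] n_subsets[of "X \<inter> {m<..}" k] assms(1) by simp
  also have "\<dots> \<le> Max ((\<lambda>t. (t choose i) * ((card X - t) choose k)) ` {..card X})"
    using card_X by (intro Max_ge finite_imageI image_eqI[where x = "card (X \<inter> {..<m})"]) auto
  finally show ?thesis .
qed

lemma occ_block_pattern_le:
  assumes "x \<noteq> y" and "j \<ge> 1"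
  obtains t where "t \<le> card (positions x w)"
    "occ (replicate i x @ replicate j y @ replicate k x) w \<le>
       (t choose i) * (card (positions y w) choose j) * ((card (positions x w) - t) choose k)"
proof -
  define X Y where "X = positions x w" and "Y = positions y w"
  define g where "g t = (t choose i) * ((card X - t) choose k)" for t
  define JJ where "JJ = {J. J \<subseteq> Y \<and> card J = j}"
  define AA where "AA J = {A. A \<subseteq> X \<inter> {..<Min J} \<and> card A = i}" for J
  define CC where "CC J = {C. C \<subseteq> X \<inter> {Min J<..} \<and> card C = k}" for J
  define union3 :: "nat set \<times> nat set \<times> nat set \<Rightarrow> nat set"
    where "union3 = (\<lambda>(J, A, C). A \<union> J \<union> C)"
  have fin: "finite X" "finite Y"
    by (simp_all add: X_def Y_def finite_positions)
  have fin_Sigma: "finite (SIGMA J:JJ. AA J \<times> CC J)"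
    using fin by (auto simp: JJ_def AA_def CC_def)
  have "embeddings (replicate i x @ replicate j y @ replicate k x) w \<subseteq> union3 ` (SIGMA J:JJ. AA J \<times> CC J)"
  proof
    fix I assume "I \<in> embeddings (replicate i x @ replicate j y @ replicate k x) w"
    then obtain J A C where "J \<in> JJ" "A \<in> AA J" "C \<in> CC J" "I = A \<union> J \<union> C"
      by (rule embedding_block_pattern_split[OF _ assms(2)]) (auto simp: JJ_def AA_def CC_def X_def Y_def)
    then show "I \<in> union3 ` (SIGMA J:JJ. AA J \<times> CC J)"
      by (auto simp: union3_def intro!: image_eqI[where x = "(J, A, C)"])
  qed
  then have "occ (replicate i x @ replicate j y @ replicate k x) w \<le> card (union3 ` (SIGMA J:JJ. AA J \<times> CC J))"
    unfolding occ_eq_card_embeddings using fin_Sigma by (intro card_mono) auto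
  also have "\<dots> \<le> card (SIGMA J:JJ. AA J \<times> CC J)"
    by (rule card_image_le[OF fin_Sigma])
  also have "\<dots> = (\<Sum>J\<in>JJ. card (AA J) * card (CC J))"
    using fin by (simp add: JJ_def AA_def CC_def card_cartesian_product)
  also have "\<dots> \<le> (\<Sum>J\<in>JJ. Max (g ` {..card X}))"
  proof (rule sum_mono)
    fix J assume "J \<in> JJ"
    then have "finite J" "J \<noteq> {}" "J \<subseteq> Y"
      using fin assms(2) by (auto simp: JJ_def intro: finite_subset)
    then have "Min J \<notin> X"
      using Min_in assms(1) by (fastforce simp: X_def Y_def positions_def)
    then show "card (AA J) * card (CC J) \<le> Max (g ` {..card X})"
      unfolding AA_def CC_def g_def by (rule card_subsets_below_above_le[OF fin(1)])
  qed
  also have "\<dots> = (card Y choose j) * Max (g ` {..card X})"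
    using fin by (simp add: JJ_def n_subsets)
  finally have bound: "occ (replicate i x @ replicate j y @ replicate k x) w \<le> (card Y choose j) * Max (g ` {..card X})" .
  have "Max (g ` {..card X}) \<in> g ` {..card X}" by (intro Max_in) auto
  then obtain t where "t \<le> card X" "Max (g ` {..card X}) = g t" by (metis atMost_iff imageE)
  with bound that show thesis by (simp add: g_def X_def Y_def mult_ac)
qed

lemma occ_block_word_ge:
  "(a choose i) * (b choose j) * (c choose k) \<le>
     occ (replicate i x @ replicate j y @ replicate k x) (replicate a x @ replicate b y @ replicate c x)"
proof -
  define w where "w = replicate a x @ replicate b y @ replicate c x"
  define AA JJ CC where "AA = {A. A \<subseteq> {0..<a} \<and> card A = i}"
    and "JJ = {J. J \<subseteq> {a..<a + b} \<and> card J = j}"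
    and "CC = {C. C \<subseteq> {a + b..<a + b + c} \<and> card C = k}"
  have blocks: "{0..<a} \<subseteq> positions x w" "{a..<a + b} \<subseteq> positions y w"
      "{a + b..<a + b + c} \<subseteq> positions x w"
    by (auto simp: positions_def w_def nth_append)
  have recover: "A = (A \<union> J \<union> C) \<inter> {0..<a} \<and> J = (A \<union> J \<union> C) \<inter> {a..<a + b} \<and>
      C = (A \<union> J \<union> C) \<inter> {a + b..<a + b + c}" if "A \<in> AA" "J \<in> JJ" "C \<in> CC" for A J C
    using that by (auto simp: AA_def JJ_def CC_def)
  have inj: "inj_on (\<lambda>(A, J, C). A \<union> J \<union> C) (AA \<times> JJ \<times> CC)"
  proof (rule inj_onI, clarify)
    fix A J C A' J' C'
    assume eq: "A \<union> J \<union> C = A' \<union> J' \<union> C'"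
      and "A \<in> AA" "A' \<in> AA" "J \<in> JJ" "C \<in> CC" "J' \<in> JJ" "C' \<in> CC"
    then show "A = A' \<and> (J, C) = (J', C')"
      using recover[of A J C] recover[of A' J' C'] unfolding eq prod.inject by metis
  qed
  have "(\<lambda>(A, J, C). A \<union> J \<union> C) ` (AA \<times> JJ \<times> CC) \<subseteq>
        embeddings (replicate i x @ replicate j y @ replicate k x) w"
  proof clarify
    fix A J C assume "A \<in> AA" "J \<in> JJ" "C \<in> CC"
    then have emb: "A \<in> embeddings (replicate i x) w" "J \<in> embeddings (replicate j y) w"
        "C \<in> embeddings (replicate k x) w"
      using blocks by (auto simp: embeddings_replicate AA_def JJ_def CC_def)
    have less: "\<forall>b\<in>J. \<forall>c\<in>C. b < c" "\<forall>a\<in>A. \<forall>d\<in>J \<union> C. a < d"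
      using \<open>A \<in> AA\<close> \<open>J \<in> JJ\<close> \<open>C \<in> CC\<close> unfolding AA_def JJ_def CC_def
      by (fastforce dest!: subsetD)+
    then have "J \<union> C \<in> embeddings (replicate j y @ replicate k x) w"
      using emb(2,3) unfolding embeddings_append by blast
    then have "A \<union> (J \<union> C) \<in> embeddings (replicate i x @ replicate j y @ replicate k x) w"
      using emb(1) less(2) unfolding embeddings_append[of "replicate i x"] by blast
    then show "A \<union> J \<union> C \<in> embeddings (replicate i x @ replicate j y @ replicate k x) w"
      by (simp add: Un_assoc)
  qed
  then have "card (AA \<times> JJ \<times> CC) \<le> card (embeddings (replicate i x @ replicate j y @ replicate k x) w)"
    using card_image[OF inj] card_mono[OF finite_embeddings] by metis
  then show ?thesis
    by (simp add: occ_eq_card_embeddings card_cartesian_product AA_def JJ_def CC_def n_subsets w_def)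
qed

lemma card_positions_binword:
  assumes "w \<in> binwords n"
  shows "card (positions 0 w) + card (positions 1 w) = n"
proof -
  have "positions 0 w \<union> positions 1 w = {0..<n}"
    using assms nth_mem by (fastforce simp: binwords_def positions_def)
  moreover have "positions 0 w \<inter> positions (1::nat) w = {}"
    by (auto simp: positions_def)
  ultimately show ?thesis
    by (metis card_Un_disjoint card_atLeastLessThan diff_zero finite_Un finite_atLeastLessThan)
qed

lemma finite_binwords: "finite (binwords n)"
proof -
  have "binwords n = {xs. set xs \<subseteq> {0, 1} \<and> length xs = n}"
    by (auto simp: binwords_def)
  then show ?thesis
    using finite_lists_length_eq[of "{0, 1 :: nat}" n] by simp
qed

lemma finite_binomial_products:
  "finite {(a choose i) * (b choose j) * (c choose k) | a b c. a + b + c = (n::nat)}"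
proof (rule finite_subset)
  show "{(a choose i) * (b choose j) * (c choose k) | a b c. a + b + c = n} \<subseteq>
        (\<lambda>(a, b, c). (a choose i) * (b choose j) * (c choose k)) ` ({..n} \<times> {..n} \<times> {..n})"
    by (force intro!: image_eqI[where x = "(a, b, c)" for a b c])
qed simp

lemma occ_binword_le_Max:
  assumes "j \<ge> 1" and "w \<in> binwords n"
  shows "occ (replicate i 1 @ replicate j 0 @ replicate k 1) w \<le>
         Max {(a choose i) * (b choose j) * (c choose k) | a b c. a + b + c = n}"
proof -
  obtain t where "t \<le> card (positions 1 w)" and
    "occ (replicate i 1 @ replicate j 0 @ replicate k 1) w \<le>
       (t choose i) * (card (positions 0 w) choose j) * ((card (positions 1 w) - t) choose k)"
    by (rule occ_block_pattern_le[of 1 0]) (use assms(1) in auto)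
  moreover have "(t choose i) * (card (positions 0 w) choose j) * ((card (positions 1 w) - t) choose k)
      \<in> {(a choose i) * (b choose j) * (c choose k) | a b c. a + b + c = n}"
    using card_positions_binword[OF assms(2)] \<open>t \<le> _\<close>
    by (intro CollectI exI[of _ t] exI[of _ "card (positions 0 w)"] exI[of _ "card (positions 1 w) - t"]) auto
  ultimately show ?thesis
    using Max_ge[OF finite_binomial_products] order_trans by blast
qed

lemma Max_le_Mnp:
  "Max {(a choose i) * (b choose j) * (c choose k) | a b c. a + b + c = n} \<le>
   Mnp n (replicate i 1 @ replicate j 0 @ replicate k 1)"
proof -
  define Q where "Q = {(a choose i) * (b choose j) * (c choose k) | a b c. a + b + c = n}"
  have "(n choose i) * (0 choose j) * (0 choose k) \<in> Q"
    unfolding Q_def by (intro CollectI exI[of _ n] exI[of _ 0]) simp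
  then have "Max Q \<in> Q"
    by (intro Max_in) (auto simp only: Q_def finite_binomial_products)
  then obtain a b c where abc: "a + b + c = n" and Max_eq: "Max Q = (a choose i) * (b choose j) * (c choose k)"
    unfolding Q_def mem_Collect_eq by (elim exE conjE) (simp add: that)
  have "Max Q \<le> occ (replicate i 1 @ replicate j 0 @ replicate k 1) (replicate a 1 @ replicate b 0 @ replicate c 1)"
    unfolding Max_eq by (rule occ_block_word_ge)
  also have "\<dots> \<le> Mnp n (replicate i 1 @ replicate j 0 @ replicate k 1)"
    unfolding Mnp_def
  proof (rule Max_ge)
    show "finite (occ (replicate i 1 @ replicate j 0 @ replicate k 1) ` binwords n)"
      by (rule finite_imageI[OF finite_binwords])
    show "occ (replicate i 1 @ replicate j 0 @ replicate k 1) (replicate a 1 @ replicate b 0 @ replicate c 1)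
        \<in> occ (replicate i 1 @ replicate j 0 @ replicate k 1) ` binwords n"
      using abc by (intro imageI) (auto simp: binwords_def)
  qed
  finally show ?thesis
    unfolding Q_def .
qed

theorem mainTheorem7:
  fixes i j k n :: nat
  assumes "j \<ge> 1" and "n \<ge> i + j + k"
  shows "Mnp n (replicate i 1 @ replicate j 0 @ replicate k 1) =
         Max {(a choose i) * (b choose j) * (c choose k) | a b c. a + b + c = n}"
proof (rule antisym)
  have "binwords n \<noteq> {}"
    by (auto simp: binwords_def intro!: exI[of _ "replicate n 0"])
  then show "Mnp n (replicate i 1 @ replicate j 0 @ replicate k 1) \<le>
      Max {(a choose i) * (b choose j) * (c choose k) | a b c. a + b + c = n}"
    unfolding Mnp_def using occ_binword_le_Max[OF assms(1)] finite_binwords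
    by (intro Max.boundedI) auto
qed (rule Max_le_Mnp)

end
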